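(* Let $R$ be a commutative Noetherian ring and let $a_{ij},\ell_{ij}$ ($1\le i\le 2$, $1\le j\le 3$), $\psi_{12},\psi_{13},\psi_{23},z_1,z_2$ be elements of $R$. Let $\mathbb Q$ be the sequence of $R$-module homomorphisms $$0\to R^2\xrightarrow{q_3}R^6\xrightarrow{q_2}R^5\xrightarrow{q_1}R$$ given by the matrices described below. Then $\mathbb Q$ is a complex (i.e. $q_1q_2=0$ and $q_2q_3=0$). Furthermore, if the ideal of $R$ generated by the five entries of $q_1$ has grade at least three, then $\mathbb Q$ is acyclic (i.e. $\operatorname{H}_j(\mathbb Q)=0$ for $j\ge 1$).
   Context: Write $A=(a_{ij})$ and $L=(\ell_{ij})$ for the $2\times 3$ matrices, $P=(\psi_{23},-\psi_{13},\psi_{12})^{\rm T}$, $[ij|kl]_{a\ell}$ notation is avoided; instead write $N=\sum_{i=1}^3(a_{1i}\ell_{2i}-a_{2i}\ell_{1i})$. The $1\times 5$ matrix is $q_1=[\,g_1\ g_2\ g_3\ g_4\ g_5\,]$ with $g_1=-\det\begin{bmatrix}\psi_{23}&-\psi_{13}&\psi_{12}\\ \ell_{11}&\ell_{12}&\ell_{13}\\ \ell_{21}&\ell_{22}&\ell_{23}\end{bmatrix}-z_2N-z_2z_1$, $g_2=P^{\rm T}A^{\rm T}\begin{bmatrix}\ell_{21}\\-\ell_{11}\end{bmatrix}-z_2(a_{12}a_{23}-a_{13}a_{22})+z_1\psi_{23}$, $g_3=P^{\rm T}A^{\rm T}\begin{bmatrix}\ell_{22}\\-\ell_{12}\end{bmatrix}+z_2(a_{11}a_{23}-a_{13}a_{21})-z_1\psi_{13}$,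 $g_4=P^{\rm T}A^{\rm T}\begin{bmatrix}\ell_{23}\\-\ell_{13}\end{bmatrix}-z_2(a_{11}a_{22}-a_{12}a_{21})+z_1\psi_{12}$, $g_5=-\det(AL^{\rm T})-z_1N-z_1^2$. The $5\times 6$ matrix $q_2$ has columns $C_1,\dots,C_6$ (entries listed from row 1 to row 5): $C_1=(\psi_{12}a_{23}-\psi_{13}a_{22}+\psi_{23}a_{21},\ -\ell_{22}\psi_{12}-\ell_{23}\psi_{13}+z_2a_{21},\ \ell_{21}\psi_{12}-\ell_{23}\psi_{23}+z_2a_{22},\ \ell_{21}\psi_{13}+\ell_{22}\psi_{23}+z_2a_{23},\ 0)$; $C_2=(-\psi_{12}a_{13}+\psi_{13}a_{12}-\psi_{23}a_{11},\ \psi_{12}\ell_{12}+\psi_{13}\ell_{13}-z_2a_{11},\ -\psi_{12}\ell_{11}+\psi_{23}\ell_{13}-z_2a_{12},\ -\psi_{13}\ell_{11}-\psi_{23}\ell_{12}-z_2a_{13},\ 0)$; $C_3=(z_1,\ \ell_{12}\ell_{23}-\ell_{13}\ell_{22},\ -(\ell_{11}\ell_{23}-\ell_{13}\ell_{21}),\ \ell_{11}\ell_{22}-\ell_{12}\ell_{21},\ -z_2)$; $C_4=(a_{12}a_{23}-a_{13}a_{22},\ -(a_{12}\ell_{22}-a_{22}\ell_{12})-(a_{13}\ell_{23}-a_{23}\ell_{13})-z_1,\ a_{12}\ell_{21}-a_{22}\ell_{11},\ a_{13}\ell_{21}-a_{23}\ell_{11},\ -\psi_{23})$; $C_5=(-(a_{11}a_{23}-a_{13}a_{21}),\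 a_{11}\ell_{22}-a_{21}\ell_{12},\ -(a_{11}\ell_{21}-a_{21}\ell_{11})-(a_{13}\ell_{23}-a_{23}\ell_{13})-z_1,\ a_{13}\ell_{22}-a_{23}\ell_{12},\ \psi_{13})$; $C_6=(a_{11}a_{22}-a_{12}a_{21},\ a_{11}\ell_{23}-a_{21}\ell_{13},\ a_{12}\ell_{23}-a_{22}\ell_{13},\ -(a_{11}\ell_{21}-a_{21}\ell_{11})-(a_{12}\ell_{22}-a_{22}\ell_{12})-z_1,\ -\psi_{12})$. The $6\times 2$ matrix $q_3$ has rows (first column entry; second column entry): row 1: $a_{11}\ell_{11}+a_{12}\ell_{12}+a_{13}\ell_{13}$; $a_{11}\ell_{21}+a_{12}\ell_{22}+a_{13}\ell_{23}+z_1$; row 2: $a_{21}\ell_{11}+a_{22}\ell_{12}+a_{23}\ell_{13}-z_1$; $a_{21}\ell_{21}+a_{22}\ell_{22}+a_{23}\ell_{23}$; row 3: $-a_{11}\psi_{23}+a_{12}\psi_{13}-a_{13}\psi_{12}$; $-a_{21}\psi_{23}+a_{22}\psi_{13}-a_{23}\psi_{12}$; row 4: $-\ell_{12}\psi_{12}-\ell_{13}\psi_{13}+z_2a_{11}$; $-\ell_{22}\psi_{12}-\ell_{23}\psi_{13}+z_2a_{21}$; row 5: $\ell_{11}\psi_{12}-\ell_{13}\psi_{23}+z_2a_{12}$; $\ell_{21}\psi_{12}-\ell_{23}\psi_{23}+z_2a_{22}$; row 6: $\ell_{11}\psi_{13}+\ell_{12}\psi_{23}+z_2a_{13}$; $\ell_{21}\psi_{13}+\ell_{22}\psi_{23}+z_2a_{23}$.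 (This is the matrix form, with respect to fixed bases, of the paper's coordinate-free complex built from maps $\phi:F\to G$, $\ell:F^*\to G$, $\psi\in\bigwedge^2F^*$, $\zeta=z_1\beta_1\wedge\beta_2\in\bigwedge^2G$, $z_2\in R$ with $\operatorname{rank}F=3$, $\operatorname{rank}G=2$.) A complex $\cdots\to C_1\to C_0\to 0$ is acyclic if $\operatorname{H}_j=0$ for all $j\ge1$. *)

theory Defs
  imports "Jordan_Normal_Form.Determinant"
begin

definition ring_ideal :: "'a::comm_ring_1 set \<Rightarrow> bool" where
  "ring_ideal I \<longleftrightarrow> 0 \<in> I \<and> (\<forall>x\<in>I. \<forall>y\<in>I. x + y \<in> I) \<and> (\<forall>r. \<forall>x\<in>I. r * x \<in> I)"

definition ideal_gen :: "'a::comm_ring_1 set \<Rightarrow> 'a set" where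
  "ideal_gen S = {y. \<exists>c. y = (\<Sum>s\<in>S. c s * s)}"

definition noetherian_ring :: "'a::comm_ring_1 itself \<Rightarrow> bool" where
  "noetherian_ring _ \<longleftrightarrow>
     (\<forall>I::'a set. ring_ideal I \<longrightarrow> (\<exists>F. finite F \<and> F \<subseteq> I \<and> I = ideal_gen F))"

definition weak_regular_seq :: "'a::comm_ring_1 list \<Rightarrow> bool" where
  "weak_regular_seq xs \<longleftrightarrow>
     (\<forall>i < length xs. \<forall>r. xs ! i * r \<in> ideal_gen (set (take i xs))
                         \<longrightarrow> r \<in> ideal_gen (set (take i xs)))"

text \<open>grade I >= n: I contains an R-regular sequence of length n (for I = R the grade
  is infinite by convention; weak regular sequences give exactly this, since for a proper
  ideal every weak regular sequence inside I is regular).\<close>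
definition grade_at_least :: "nat \<Rightarrow> 'a::comm_ring_1 set \<Rightarrow> bool" where
  "grade_at_least n I \<longleftrightarrow> (\<exists>xs. length xs = n \<and> set xs \<subseteq> I \<and> weak_regular_seq xs)"

definition matA :: "'a::comm_ring_1 \<Rightarrow> 'a \<Rightarrow> 'a \<Rightarrow> 'a \<Rightarrow> 'a \<Rightarrow> 'a \<Rightarrow> 'a mat" where
  "matA a11 a12 a13 a21 a22 a23 = mat_of_rows_list 3 [[a11,a12,a13],[a21,a22,a23]]"

definition matL :: "'a::comm_ring_1 \<Rightarrow> 'a \<Rightarrow> 'a \<Rightarrow> 'a \<Rightarrow> 'a \<Rightarrow> 'a \<Rightarrow> 'a mat" where
  "matL l11 l12 l13 l21 l22 l23 = mat_of_rows_list 3 [[l11,l12,l13],[l21,l22,l23]]"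

definition q1 :: "'a::comm_ring_1 \<Rightarrow> 'a \<Rightarrow> 'a \<Rightarrow> 'a \<Rightarrow> 'a \<Rightarrow> 'a \<Rightarrow>
    'a \<Rightarrow> 'a \<Rightarrow> 'a \<Rightarrow> 'a \<Rightarrow> 'a \<Rightarrow> 'a \<Rightarrow> 'a \<Rightarrow> 'a \<Rightarrow> 'a \<Rightarrow> 'a \<Rightarrow> 'a \<Rightarrow> 'a mat" where
  "q1 a11 a12 a13 a21 a22 a23 l11 l12 l13 l21 l22 l23 p12 p13 p23 z1 z2 =
   (let A = matA a11 a12 a13 a21 a22 a23;
        L = matL l11 l12 l13 l21 l22 l23;
        P = vec_of_list [p23, -p13, p12];
        N = (a11*l21 - a21*l11) + (a12*l22 - a22*l12) + (a13*l23 - a23*l13);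
        g1 = - det (mat_of_rows_list 3 [[p23, -p13, p12],[l11,l12,l13],[l21,l22,l23]])
             - z2*N - z2*z1;
        g2 = P \<bullet> (transpose_mat A *\<^sub>v vec_of_list [l21, -l11])
             - z2*(a12*a23 - a13*a22) + z1*p23;
        g3 = P \<bullet> (transpose_mat A *\<^sub>v vec_of_list [l22, -l12])
             + z2*(a11*a23 - a13*a21) - z1*p13;
        g4 = P \<bullet> (transpose_mat A *\<^sub>v vec_of_list [l23, -l13])
             - z2*(a11*a22 - a12*a21) + z1*p12;
        g5 = - det (A * transpose_mat L) - z1*N - z1^2
    in mat_of_rows_list 5 [[g1, g2, g3, g4, g5]])"

definition q2 :: "'a::comm_ring_1 \<Rightarrow> 'a \<Rightarrow> 'a \<Rightarrow> 'a \<Rightarrow> 'a \<Rightarrow> 'a \<Rightarrow>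
    'a \<Rightarrow> 'a \<Rightarrow> 'a \<Rightarrow> 'a \<Rightarrow> 'a \<Rightarrow> 'a \<Rightarrow> 'a \<Rightarrow> 'a \<Rightarrow> 'a \<Rightarrow> 'a \<Rightarrow> 'a \<Rightarrow> 'a mat" where
  "q2 a11 a12 a13 a21 a22 a23 l11 l12 l13 l21 l22 l23 p12 p13 p23 z1 z2 =
   mat_of_cols_list 5
    [ [p12*a23 - p13*a22 + p23*a21,
       - l22*p12 - l23*p13 + z2*a21,
       l21*p12 - l23*p23 + z2*a22,
       l21*p13 + l22*p23 + z2*a23,
       0],
      [- p12*a13 + p13*a12 - p23*a11,
       p12*l12 + p13*l13 - z2*a11,
       - p12*l11 + p23*l13 - z2*a12,
       - p13*l11 - p23*l12 - z2*a13,
       0],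
      [z1,
       l12*l23 - l13*l22,
       - (l11*l23 - l13*l21),
       l11*l22 - l12*l21,
       - z2],
      [a12*a23 - a13*a22,
       - (a12*l22 - a22*l12) - (a13*l23 - a23*l13) - z1,
       a12*l21 - a22*l11,
       a13*l21 - a23*l11,
       - p23],
      [- (a11*a23 - a13*a21),
       a11*l22 - a21*l12,
       - (a11*l21 - a21*l11) - (a13*l23 - a23*l13) - z1,
       a13*l22 - a23*l12,
       p13],
      [a11*a22 - a12*a21,
       a11*l23 - a21*l13,
       a12*l23 - a22*l13,
       - (a11*l21 - a21*l11) - (a12*l22 - a22*l12) - z1,
       - p12] ]"

definition q3 :: "'a::comm_ring_1 \<Rightarrow> 'a \<Rightarrow> 'a \<Rightarrow> 'a \<Rightarrow> 'a \<Rightarrow> 'a \<Rightarrow>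
    'a \<Rightarrow> 'a \<Rightarrow> 'a \<Rightarrow> 'a \<Rightarrow> 'a \<Rightarrow> 'a \<Rightarrow> 'a \<Rightarrow> 'a \<Rightarrow> 'a \<Rightarrow> 'a \<Rightarrow> 'a \<Rightarrow> 'a mat" where
  "q3 a11 a12 a13 a21 a22 a23 l11 l12 l13 l21 l22 l23 p12 p13 p23 z1 z2 =
   mat_of_rows_list 2
    [ [a11*l11 + a12*l12 + a13*l13, a11*l21 + a12*l22 + a13*l23 + z1],
      [a21*l11 + a22*l12 + a23*l13 - z1, a21*l21 + a22*l22 + a23*l23],
      [- a11*p23 + a12*p13 - a13*p12, - a21*p23 + a22*p13 - a23*p12],
      [- l12*p12 - l13*p13 + z2*a11, - l22*p12 - l23*p13 + z2*a21],
      [l11*p12 - l13*p23 + z2*a12, l21*p12 - l23*p23 + z2*a22],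
      [l11*p13 + l12*p23 + z2*a13, l21*p13 + l22*p23 + z2*a23] ]"

text \<open>Matrices act on column vectors; f3 : R^n3 -> R^n2 etc.\<close>
definition is_complex3 :: "'a::comm_ring_1 mat \<Rightarrow> 'a mat \<Rightarrow> 'a mat \<Rightarrow> bool" where
  "is_complex3 f1 f2 f3 \<longleftrightarrow>
     f1 * f2 = 0\<^sub>m (dim_row f1) (dim_col f2) \<and> f2 * f3 = 0\<^sub>m (dim_row f2) (dim_col f3)"

definition acyclic3 :: "'a::comm_ring_1 mat \<Rightarrow> 'a mat \<Rightarrow> 'a mat \<Rightarrow> bool" where
  "acyclic3 f1 f2 f3 \<longleftrightarrow>
     (\<forall>v \<in> carrier_vec (dim_col f1). f1 *\<^sub>v v = 0\<^sub>v (dim_row f1) \<longrightarrow>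
         (\<exists>w \<in> carrier_vec (dim_col f2). v = f2 *\<^sub>v w)) \<and>
     (\<forall>v \<in> carrier_vec (dim_col f2). f2 *\<^sub>v v = 0\<^sub>v (dim_row f2) \<longrightarrow>
         (\<exists>w \<in> carrier_vec (dim_col f3). v = f3 *\<^sub>v w)) \<and>
     (\<forall>v \<in> carrier_vec (dim_col f3). f3 *\<^sub>v v = 0\<^sub>v (dim_row f3) \<longrightarrow> v = 0\<^sub>v (dim_col f3))"

end

theory Submission
  imports Defs
begin

text \<open>Each entry \<open>g\<^sub>k\<close> of \<open>q\<^sub>1\<close> acts null-homotopically on \<open>\<bbbQ>\<close>: there are
  explicit maps \<open>s\<close> with \<open>q\<^sub>2 s\<^sub>1 + s\<^sub>0 q\<^sub>1 = g\<^sub>k\<close>, \<open>q\<^sub>3 s\<^sub>2 + s\<^sub>1 q\<^sub>2 = g\<^sub>k\<close> and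
  \<open>s\<^sub>2 q\<^sub>3 = g\<^sub>k\<close>. Hence the ideal \<open>I\<close> of these entries annihilates the homology of \<open>\<bbbQ>\<close>.
  If \<open>I\<close> contains a regular sequence \<open>x\<^sub>1, x\<^sub>2, x\<^sub>3\<close>, a diagram chase through the
  Koszul relations shows that the homology vanishes: \<open>x\<^sub>1\<close> kills \<open>ker q\<^sub>3 \<subseteq> R\<^sup>2\<close>, so
  \<open>q\<^sub>3\<close> is injective; \<open>x\<^sub>1, x\<^sub>2\<close> then give exactness at \<open>R\<^sup>6\<close>, and \<open>x\<^sub>1, x\<^sub>2, x\<^sub>3\<close>
  exactness at \<open>R\<^sup>5\<close>.\<close>

lemma mult_mat_vec_zero: "A \<in> carrier_mat n m \<Longrightarrow> A *\<^sub>v 0\<^sub>v m = 0\<^sub>v n"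
  by (intro eq_vecI) auto

lemma mult_mat_vec_smult:
  "(A :: 'a::comm_ring_1 mat) \<in> carrier_mat n m \<Longrightarrow> v \<in> carrier_vec m \<Longrightarrow> A *\<^sub>v (k \<cdot>\<^sub>v v) = k \<cdot>\<^sub>v (A *\<^sub>v v)"
  by (intro eq_vecI) (auto simp: scalar_prod_def sum_distrib_left mult.left_commute)

lemma smult_mat_mult_vec:
  "(A :: 'a::comm_ring_1 mat) \<in> carrier_mat n m \<Longrightarrow> v \<in> carrier_vec m \<Longrightarrow> (k \<cdot>\<^sub>m A) *\<^sub>v v = k \<cdot>\<^sub>v (A *\<^sub>v v)"
  by (intro eq_vecI) (auto simp: scalar_prod_def sum_distrib_left mult.assoc)

lemma smult_one_mat_mult_vec: "(v :: 'a::comm_ring_1 vec) \<in> carrier_vec n \<Longrightarrow> (x \<cdot>\<^sub>m 1\<^sub>m n) *\<^sub>v v = x \<cdot>\<^sub>v v"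
  by (simp add: smult_mat_mult_vec[OF one_carrier_mat])

lemma smult_vec_cancel:
  fixes x :: "'a::comm_ring_1"
  assumes nzd: "\<forall>r. x * r = 0 \<longrightarrow> r = 0"
    and v: "v \<in> carrier_vec n" and w: "w \<in> carrier_vec n" and eq: "x \<cdot>\<^sub>v v = x \<cdot>\<^sub>v w"
  shows "v = w"
proof (rule eq_vecI)
  fix i assume "i < dim_vec w"
  then have "x * v $ i = x * w $ i"
    using arg_cong[OF eq, of "\<lambda>u. u $ i"] v w by simp
  then have "x * (v $ i - w $ i) = 0"
    by (simp add: right_diff_distrib)
  then have "v $ i - w $ i = 0"
    using nzd by blast
  then show "v $ i = w $ i"
    by simp
qed (use v w in simp)

lemma smult_vec_divide:
  fixes x y :: "'a::comm_ring_1"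
  assumes reg: "\<forall>r c. y * r = c * x \<longrightarrow> (\<exists>d. r = d * x)"
    and v: "v \<in> carrier_vec n" and u: "u \<in> carrier_vec n" and eq: "y \<cdot>\<^sub>v v = x \<cdot>\<^sub>v u"
  obtains w where "w \<in> carrier_vec n" "v = x \<cdot>\<^sub>v w"
proof -
  have "\<exists>d. v $ i = d * x" if "i < n" for i
  proof (rule reg[rule_format])
    show "y * v $ i = u $ i * x"
      using arg_cong[OF eq, of "\<lambda>z. z $ i"] that v u by (simp add: mult.commute)
  qed
  then obtain d where d: "\<And>i. i < n \<Longrightarrow> v $ i = d i * x"
    by metis
  show thesis
    using v d by (intro that[of "vec n d"] eq_vecI) (auto simp: mult.commute)
qed

lemma smult_vec_divide2:
  fixes x y z :: "'a::comm_ring_1"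
  assumes reg: "\<forall>r a b. z * r = a * x + b * y \<longrightarrow> (\<exists>c d. r = c * x + d * y)"
    and v: "v \<in> carrier_vec n" and p: "p \<in> carrier_vec n" and q: "q \<in> carrier_vec n"
    and eq: "z \<cdot>\<^sub>v v = x \<cdot>\<^sub>v p + y \<cdot>\<^sub>v q"
  obtains a b where "a \<in> carrier_vec n" "b \<in> carrier_vec n" "v = x \<cdot>\<^sub>v a + y \<cdot>\<^sub>v b"
proof -
  have "\<exists>c d. v $ i = c * x + d * y" if "i < n" for i
  proof (rule reg[rule_format])
    show "z * v $ i = p $ i * x + q $ i * y"
      using arg_cong[OF eq, of "\<lambda>u. u $ i"] that v p q by (simp add: mult.commute)
  qed
  then obtain c d where cd: "\<And>i. i < n \<Longrightarrow> v $ i = c i * x + d i * y"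
    by metis
  show thesis
    using v cd by (intro that[of "vec n c" "vec n d"] eq_vecI) (auto simp: mult.commute)
qed

lemma minus_eq_zero_vec_iff:
  "(a :: 'a::ab_group_add vec) \<in> carrier_vec n \<Longrightarrow> b \<in> carrier_vec n \<Longrightarrow> a - b = 0\<^sub>v n \<longleftrightarrow> a = b"
  by (auto simp: vec_eq_iff)

lemma det_dim_1:
  assumes "(A :: 'a::comm_ring_1 mat) \<in> carrier_mat 1 1"
  shows "det A = A $$ (0, 0)"
proof -
  have "det A = (\<Sum>j<1. A $$ (0, j) * cofactor A 0 j)"
    by (rule laplace_expansion_row[OF assms]) simp
  also have "\<dots> = A $$ (0, 0)"
    using assms by (simp add: cofactor_def mat_delete_carrier[OF assms, simplified])
  finally show ?thesis .
qed

lemma det_dim_2: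
  assumes "(A :: 'a::comm_ring_1 mat) \<in> carrier_mat 2 2"
  shows "det A = A $$ (0, 0) * A $$ (1, 1) - A $$ (0, 1) * A $$ (1, 0)"
proof -
  have minor: "mat_delete A 0 j \<in> carrier_mat 1 1" for j
    using mat_delete_carrier[OF assms] by simp
  have "det A = (\<Sum>j<2. A $$ (0, j) * cofactor A 0 j)"
    by (rule laplace_expansion_row[OF assms]) simp
  also have "\<dots> = A $$ (0, 0) * det (mat_delete A 0 0) - A $$ (0, 1) * det (mat_delete A 0 1)"
    by (simp add: cofactor_def eval_nat_numeral)
  also have "\<dots> = A $$ (0, 0) * A $$ (1, 1) - A $$ (0, 1) * A $$ (1, 0)"
    using assms unfolding det_dim_1[OF minor] by (simp add: mat_delete_def)
  finally show ?thesis .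
qed

lemma det_dim_3:
  assumes "(A :: 'a::comm_ring_1 mat) \<in> carrier_mat 3 3"
  shows "det A = A $$ (0, 0) * (A $$ (1, 1) * A $$ (2, 2) - A $$ (1, 2) * A $$ (2, 1))
    - A $$ (0, 1) * (A $$ (1, 0) * A $$ (2, 2) - A $$ (1, 2) * A $$ (2, 0))
    + A $$ (0, 2) * (A $$ (1, 0) * A $$ (2, 1) - A $$ (1, 1) * A $$ (2, 0))"
proof -
  have minor: "mat_delete A 0 j \<in> carrier_mat 2 2" for j
    using mat_delete_carrier[OF assms] by simp
  have "det A = (\<Sum>j<3. A $$ (0, j) * cofactor A 0 j)"
    by (rule laplace_expansion_row[OF assms]) simp
  also have "\<dots> = A $$ (0, 0) * det (mat_delete A 0 0) - A $$ (0, 1) * det (mat_delete A 0 1)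
      + A $$ (0, 2) * det (mat_delete A 0 2)"
    by (simp add: cofactor_def eval_nat_numeral)
  also have "\<dots> = A $$ (0, 0) * (A $$ (1, 1) * A $$ (2, 2) - A $$ (1, 2) * A $$ (2, 1))
      - A $$ (0, 1) * (A $$ (1, 0) * A $$ (2, 2) - A $$ (1, 2) * A $$ (2, 0))
      + A $$ (0, 2) * (A $$ (1, 0) * A $$ (2, 1) - A $$ (1, 1) * A $$ (2, 0))"
    using assms unfolding det_dim_2[OF minor] by (simp add: mat_delete_def eval_nat_numeral)
  finally show ?thesis .
qed

lemma mem_ideal_gen_insert:
  fixes y a :: "'a::comm_ring_1"
  assumes "finite S"
  shows "y \<in> ideal_gen (insert a S) \<longleftrightarrow> (\<exists>c z. z \<in> ideal_gen S \<and> y = c * a + z)"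
proof (cases "a \<in> S")
  case True
  have "(\<Sum>s\<in>S. (if s = a then c else 0) * s) = c * a" for c
    using True assms by (simp add: if_distrib[of "\<lambda>u. u * _"] cong: if_cong)
  then have lincomb: "c * a + (\<Sum>s\<in>S. d s * s) = (\<Sum>s\<in>S. (d s + (if s = a then c else 0)) * s)" for c d
    by (simp add: distrib_right sum.distrib add.commute)
  show ?thesis
  proof
    assume "y \<in> ideal_gen (insert a S)"
    then have "y \<in> ideal_gen S"
      using True by (simp add: insert_absorb)
    then show "\<exists>c z. z \<in> ideal_gen S \<and> y = c * a + z"
      by (intro exI[of _ 0] exI[of _ y]) simp
  next
    assume "\<exists>c z. z \<in> ideal_gen S \<and> y = c * a + z"
    then obtain c d where "y = c * a + (\<Sum>s\<in>S. d s * s)"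
      unfolding ideal_gen_def by blast
    then show "y \<in> ideal_gen (insert a S)"
      unfolding ideal_gen_def insert_absorb[OF True]
      by (intro CollectI exI[of _ "\<lambda>s. d s + (if s = a then c else 0)"]) (simp add: lincomb)
  qed
next
  case False
  have "(\<Sum>s\<in>insert a S. d s * s) = d a * a + (\<Sum>s\<in>S. d s * s)" for d
    using False assms by simp
  moreover have "c * a + (\<Sum>s\<in>S. d s * s) = (\<Sum>s\<in>insert a S. (d(a := c)) s * s)" for c d
  proof -
    have "(\<Sum>s\<in>S. (d(a := c)) s * s) = (\<Sum>s\<in>S. d s * s)"
      using False by (intro sum.cong) auto
    then show ?thesis
      using False assms by simp
  qed
  ultimately show ?thesis
    unfolding ideal_gen_def by blast
qed

lemma mem_ideal_gen_empty: "y \<in> ideal_gen {} \<longleftrightarrow> y = 0"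
  by (simp add: ideal_gen_def)

lemma mem_ideal_gen_singleton: "y \<in> ideal_gen {x} \<longleftrightarrow> (\<exists>c. y = c * x)"
  by (simp only: mem_ideal_gen_insert[of "{}"] finite.intros mem_ideal_gen_empty) simp

lemma mem_ideal_gen_pair: "y \<in> ideal_gen {x, x'} \<longleftrightarrow> (\<exists>c d. y = c * x + d * x')"
  by (simp only: mem_ideal_gen_insert[of "{x'}"] finite.intros mem_ideal_gen_singleton) auto

lemma weak_regular_seq_3D:
  fixes x1 x2 x3 :: "'a::comm_ring_1"
  assumes "weak_regular_seq [x1, x2, x3]"
  shows "\<forall>r. x1 * r = 0 \<longrightarrow> r = 0"
    and "\<forall>r c. x2 * r = c * x1 \<longrightarrow> (\<exists>d. r = d * x1)"
    and "\<forall>r a b. x3 * r = a * x1 + b * x2 \<longrightarrow> (\<exists>c d. r = c * x1 + d * x2)"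
proof -
  have reg: "\<forall>r. [x1, x2, x3] ! i * r \<in> ideal_gen (set (take i [x1, x2, x3]))
      \<longrightarrow> r \<in> ideal_gen (set (take i [x1, x2, x3]))" if "i < length [x1, x2, x3]" for i
    using assms that unfolding weak_regular_seq_def by blast
  show "\<forall>r. x1 * r = 0 \<longrightarrow> r = 0"
    using reg[of 0] by (simp add: mem_ideal_gen_empty)
  show "\<forall>r c. x2 * r = c * x1 \<longrightarrow> (\<exists>d. r = d * x1)"
    using reg[of 1] by (simp add: mem_ideal_gen_singleton)
  show "\<forall>r a b. x3 * r = a * x1 + b * x2 \<longrightarrow> (\<exists>c d. r = c * x1 + d * x2)"
    using reg[of 2] by (simp add: numeral_2_eq_2 mem_ideal_gen_pair)
qed

section \<open>Annihilators of homology\<close>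

definition annihilates_homology :: "'a::comm_ring_1 \<Rightarrow> 'a mat \<Rightarrow> 'a mat \<Rightarrow> bool" where
  "annihilates_homology x f g \<longleftrightarrow>
     (\<forall>v \<in> carrier_vec (dim_col f). f *\<^sub>v v = 0\<^sub>v (dim_row f) \<longrightarrow>
        (\<exists>w \<in> carrier_vec (dim_col g). x \<cdot>\<^sub>v v = g *\<^sub>v w))"

lemma annihilates_homologyI:
  assumes "f \<in> carrier_mat n0 n1" "g \<in> carrier_mat n1 n2"
    and "\<And>v. v \<in> carrier_vec n1 \<Longrightarrow> f *\<^sub>v v = 0\<^sub>v n0 \<Longrightarrow> \<exists>w \<in> carrier_vec n2. x \<cdot>\<^sub>v v = g *\<^sub>v w"
  shows "annihilates_homology x f g"
proof -
  have "dim_row f = n0" "dim_col f = n1" "dim_col g = n2"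
    using assms(1,2) by auto
  then show ?thesis
    unfolding annihilates_homology_def using assms(3) by simp
qed

lemma annihilates_homologyE:
  assumes "annihilates_homology x f g" "f \<in> carrier_mat n0 n1" "g \<in> carrier_mat n1 n2"
    and "v \<in> carrier_vec n1" "f *\<^sub>v v = 0\<^sub>v n0"
  obtains w where "w \<in> carrier_vec n2" "x \<cdot>\<^sub>v v = g *\<^sub>v w"
  using assms unfolding annihilates_homology_def by auto

lemma annihilates_homology_zero_mat_iff:
  assumes "f \<in> carrier_mat n0 n1"
  shows "annihilates_homology x f (0\<^sub>m n1 0) \<longleftrightarrow>
    (\<forall>v \<in> carrier_vec n1. f *\<^sub>v v = 0\<^sub>v n0 \<longrightarrow> x \<cdot>\<^sub>v v = 0\<^sub>v n1)"
proof -
  have zero: "0\<^sub>m n1 0 *\<^sub>v w = 0\<^sub>v n1" if "w \<in> carrier_vec 0" for w :: "'a vec"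
    using that by (intro eq_vecI) (auto simp: scalar_prod_def)
  have "(\<exists>w \<in> carrier_vec 0. u = 0\<^sub>m n1 0 *\<^sub>v w) \<longleftrightarrow> u = 0\<^sub>v n1" for u :: "'a vec"
    by (metis zero zero_carrier_vec)
  then show ?thesis
    using assms unfolding annihilates_homology_def by auto
qed

lemma annihilates_homology_zero:
  assumes f: "f \<in> carrier_mat n0 n1" and g: "g \<in> carrier_mat n1 n2"
  shows "annihilates_homology 0 f g"
proof (rule annihilates_homologyI[OF f g])
  fix v :: "'a vec" assume "v \<in> carrier_vec n1"
  then have "0 \<cdot>\<^sub>v v = g *\<^sub>v 0\<^sub>v n2"
    using g by (intro eq_vecI) auto
  then show "\<exists>w \<in> carrier_vec n2. 0 \<cdot>\<^sub>v v = g *\<^sub>v w"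
    by (intro bexI[of _ "0\<^sub>v n2"]) auto
qed

lemma annihilates_homology_lincomb:
  assumes f: "f \<in> carrier_mat n0 n1" and g: "g \<in> carrier_mat n1 n2"
    and "annihilates_homology x f g" "annihilates_homology y f g"
  shows "annihilates_homology (r * x + y) f g"
proof (rule annihilates_homologyI[OF f g])
  fix v assume v: "v \<in> carrier_vec n1" "f *\<^sub>v v = 0\<^sub>v n0"
  obtain wx where wx: "wx \<in> carrier_vec n2" "x \<cdot>\<^sub>v v = g *\<^sub>v wx"
    by (rule annihilates_homologyE[OF assms(3) f g v])
  obtain wy where wy: "wy \<in> carrier_vec n2" "y \<cdot>\<^sub>v v = g *\<^sub>v wy"
    by (rule annihilates_homologyE[OF assms(4) f g v])
  have "(r * x + y) \<cdot>\<^sub>v v = r \<cdot>\<^sub>v (x \<cdot>\<^sub>v v) + y \<cdot>\<^sub>v v"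
    using v(1) by (intro eq_vecI) (auto simp: algebra_simps)
  also have "\<dots> = g *\<^sub>v (r \<cdot>\<^sub>v wx + wy)"
    using g wx wy by (simp add: mult_add_distrib_mat_vec[of _ n1 n2] mult_mat_vec_smult)
  finally show "\<exists>w \<in> carrier_vec n2. (r * x + y) \<cdot>\<^sub>v v = g *\<^sub>v w"
    using wx wy by (intro bexI[of _ "r \<cdot>\<^sub>v wx + wy"]) auto
qed

lemma annihilates_homology_ideal_gen:
  assumes f: "f \<in> carrier_mat n0 n1" and g: "g \<in> carrier_mat n1 n2"
    and "finite S" "\<forall>s \<in> S. annihilates_homology s f g" "y \<in> ideal_gen S"
  shows "annihilates_homology y f g"
proof -
  obtain c where y: "y = (\<Sum>s\<in>S. c s * s)"
    using assms(5) unfolding ideal_gen_def by blast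
  have "annihilates_homology (\<Sum>s\<in>S'. c s * s) f g" if "finite S'" "S' \<subseteq> S" for S'
    using that
  proof (induction S' rule: finite_induct)
    case empty
    then show ?case using annihilates_homology_zero[OF f g] by simp
  next
    case (insert s S')
    then show ?case using assms(4) by (simp add: annihilates_homology_lincomb[OF f g])
  qed
  then show ?thesis using y assms(3) by blast
qed

lemma annihilates_homology_if_homotopy:
  assumes f: "f \<in> carrier_mat n0 n1" and g: "g \<in> carrier_mat n1 n2"
    and s: "s \<in> carrier_mat n2 n1" and t: "t \<in> carrier_mat n1 n0"
    and homotopy: "g * s + t * f = x \<cdot>\<^sub>m 1\<^sub>m n1"
  shows "annihilates_homology x f g"
proof (rule annihilates_homologyI[OF f g])
  fix v assume v: "v \<in> carrier_vec n1" "f *\<^sub>v v = 0\<^sub>v n0"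
  have "x \<cdot>\<^sub>v v = (g * s + t * f) *\<^sub>v v"
    using v(1) by (simp add: homotopy smult_one_mat_mult_vec)
  also have "\<dots> = g *\<^sub>v (s *\<^sub>v v) + t *\<^sub>v (f *\<^sub>v v)"
    using f g s t v(1) by (simp add: add_mult_distrib_mat_vec[of _ n1 n1])
  also have "\<dots> = g *\<^sub>v (s *\<^sub>v v)"
    using g s t v by (simp add: mult_mat_vec_zero)
  finally show "\<exists>w \<in> carrier_vec n2. x \<cdot>\<^sub>v v = g *\<^sub>v w"
    using s v by (intro bexI[of _ "s *\<^sub>v v"]) auto
qed

lemma cross_combination_in_kernel:
  fixes g :: "'a::comm_ring_1 mat"
  assumes g: "g \<in> carrier_mat n m" and a: "a \<in> carrier_vec m" and b: "b \<in> carrier_vec m"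
    and v: "v \<in> carrier_vec n" and ga: "x \<cdot>\<^sub>v v = g *\<^sub>v a" and gb: "y \<cdot>\<^sub>v v = g *\<^sub>v b"
  shows "g *\<^sub>v (y \<cdot>\<^sub>v a - x \<cdot>\<^sub>v b) = 0\<^sub>v n"
proof -
  have "g *\<^sub>v (y \<cdot>\<^sub>v a - x \<cdot>\<^sub>v b) = y \<cdot>\<^sub>v (x \<cdot>\<^sub>v v) - x \<cdot>\<^sub>v (y \<cdot>\<^sub>v v)"
    using g a b by (simp add: mult_minus_distrib_mat_vec mult_mat_vec_smult ga gb)
  also have "\<dots> = 0\<^sub>v n"
    using v by (intro eq_vecI) auto
  finally show ?thesis .
qed

lemma exact_if_annihilated_by_nonzerodivisor:
  fixes f :: "'a::comm_ring_1 mat"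
  assumes f: "f \<in> carrier_mat n0 n1" and nzd: "\<forall>r. x * r = 0 \<longrightarrow> r = 0"
    and ann: "annihilates_homology x f (0\<^sub>m n1 0)"
  shows "annihilates_homology 1 f (0\<^sub>m n1 0)"
  unfolding annihilates_homology_zero_mat_iff[OF f]
proof (intro ballI impI)
  fix v assume v: "v \<in> carrier_vec n1" "f *\<^sub>v v = 0\<^sub>v n0"
  then have "x \<cdot>\<^sub>v v = x \<cdot>\<^sub>v 0\<^sub>v n1"
    using ann unfolding annihilates_homology_zero_mat_iff[OF f] by (auto simp: vec_eq_iff)
  then show "1 \<cdot>\<^sub>v v = 0\<^sub>v n1"
    using smult_vec_cancel[OF nzd v(1)] by simp
qed

lemma exact_if_annihilated_by_regular_pair:
  fixes f :: "'a::comm_ring_1 mat"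
  assumes f: "f \<in> carrier_mat n1 n2" and g: "g \<in> carrier_mat n2 n3"
    and g_inj: "\<And>u. u \<in> carrier_vec n3 \<Longrightarrow> g *\<^sub>v u = 0\<^sub>v n2 \<Longrightarrow> u = 0\<^sub>v n3"
    and reg1: "\<forall>r. x1 * r = 0 \<longrightarrow> r = 0"
    and reg2: "\<forall>r c. x2 * r = c * x1 \<longrightarrow> (\<exists>d. r = d * x1)"
    and ann1: "annihilates_homology x1 f g" and ann2: "annihilates_homology x2 f g"
  shows "annihilates_homology 1 f g"
proof (rule annihilates_homologyI[OF f g])
  fix v assume v: "v \<in> carrier_vec n2" "f *\<^sub>v v = 0\<^sub>v n1"
  obtain w1 where w1: "w1 \<in> carrier_vec n3" "x1 \<cdot>\<^sub>v v = g *\<^sub>v w1"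
    by (rule annihilates_homologyE[OF ann1 f g v])
  obtain w2 where w2: "w2 \<in> carrier_vec n3" "x2 \<cdot>\<^sub>v v = g *\<^sub>v w2"
    by (rule annihilates_homologyE[OF ann2 f g v])
  have "x2 \<cdot>\<^sub>v w1 - x1 \<cdot>\<^sub>v w2 = 0\<^sub>v n3"
    using g_inj cross_combination_in_kernel[OF g w1(1) w2(1) v(1) w1(2) w2(2)] w1 w2 by simp
  then have "x2 \<cdot>\<^sub>v w1 = x1 \<cdot>\<^sub>v w2"
    using w1 w2 by (simp add: minus_eq_zero_vec_iff)
  then obtain u where u: "u \<in> carrier_vec n3" "w1 = x1 \<cdot>\<^sub>v u"
    using smult_vec_divide[OF reg2 w1(1) w2(1)] by blast
  have "x1 \<cdot>\<^sub>v v = x1 \<cdot>\<^sub>v (g *\<^sub>v u)"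
    using w1(2) g u by (simp add: mult_mat_vec_smult)
  then have "v = g *\<^sub>v u"
    using g u by (intro smult_vec_cancel[OF reg1 v(1)]) auto
  then show "\<exists>w \<in> carrier_vec n3. 1 \<cdot>\<^sub>v v = g *\<^sub>v w"
    using u by auto
qed

lemma cross_combination_in_image:
  fixes g :: "'a::comm_ring_1 mat"
  assumes g: "g \<in> carrier_mat n1 n2" and h: "h \<in> carrier_mat n2 n3"
    and exact: "annihilates_homology 1 g h"
    and a: "a \<in> carrier_vec n2" and b: "b \<in> carrier_vec n2" and v: "v \<in> carrier_vec n1"
    and ga: "x \<cdot>\<^sub>v v = g *\<^sub>v a" and gb: "y \<cdot>\<^sub>v v = g *\<^sub>v b"
  obtains u where "u \<in> carrier_vec n3" "y \<cdot>\<^sub>v a - x \<cdot>\<^sub>v b = h *\<^sub>v u"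
proof -
  have "g *\<^sub>v (y \<cdot>\<^sub>v a - x \<cdot>\<^sub>v b) = 0\<^sub>v n1"
    by (rule cross_combination_in_kernel[OF g a b v ga gb])
  moreover have "y \<cdot>\<^sub>v a - x \<cdot>\<^sub>v b \<in> carrier_vec n2"
    using a b by simp
  ultimately obtain u where "u \<in> carrier_vec n3" "1 \<cdot>\<^sub>v (y \<cdot>\<^sub>v a - x \<cdot>\<^sub>v b) = h *\<^sub>v u"
    using annihilates_homologyE[OF exact g h] by metis
  then show thesis
    using that by simp
qed

text \<open>The Koszul syzygy \<open>x\<^sub>3 u\<^sub>1\<^sub>2 - x\<^sub>2 u\<^sub>1\<^sub>3 + x\<^sub>1 u\<^sub>2\<^sub>3\<close> of the lifts \<open>u\<^sub>i\<^sub>j\<close> lies in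
  \<open>ker h = 0\<close>, so regularity of \<open>x\<^sub>3\<close> modulo \<open>(x\<^sub>1, x\<^sub>2)\<close> puts \<open>u\<^sub>1\<^sub>2\<close> into \<open>(x\<^sub>1, x\<^sub>2)\<close>.\<close>

lemma cross_combination_in_regular_image:
  fixes g :: "'a::comm_ring_1 mat"
  assumes g: "g \<in> carrier_mat n1 n2" and h: "h \<in> carrier_mat n2 n3"
    and h_inj: "\<And>u. u \<in> carrier_vec n3 \<Longrightarrow> h *\<^sub>v u = 0\<^sub>v n2 \<Longrightarrow> u = 0\<^sub>v n3"
    and exact: "annihilates_homology 1 g h"
    and reg3: "\<forall>r a b. x3 * r = a * x1 + b * x2 \<longrightarrow> (\<exists>c d. r = c * x1 + d * x2)"
    and v: "v \<in> carrier_vec n1"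
    and w1: "w1 \<in> carrier_vec n2" "x1 \<cdot>\<^sub>v v = g *\<^sub>v w1"
    and w2: "w2 \<in> carrier_vec n2" "x2 \<cdot>\<^sub>v v = g *\<^sub>v w2"
    and w3: "w3 \<in> carrier_vec n2" "x3 \<cdot>\<^sub>v v = g *\<^sub>v w3"
  obtains p q where "p \<in> carrier_vec n3" "q \<in> carrier_vec n3"
    "x2 \<cdot>\<^sub>v w1 - x1 \<cdot>\<^sub>v w2 = h *\<^sub>v (x1 \<cdot>\<^sub>v p + x2 \<cdot>\<^sub>v q)"
proof -
  obtain u12 where u12: "u12 \<in> carrier_vec n3" "x2 \<cdot>\<^sub>v w1 - x1 \<cdot>\<^sub>v w2 = h *\<^sub>v u12"
    by (rule cross_combination_in_image[OF g h exact w1(1) w2(1) v w1(2) w2(2)])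
  obtain u13 where u13: "u13 \<in> carrier_vec n3" "x3 \<cdot>\<^sub>v w1 - x1 \<cdot>\<^sub>v w3 = h *\<^sub>v u13"
    by (rule cross_combination_in_image[OF g h exact w1(1) w3(1) v w1(2) w3(2)])
  obtain u23 where u23: "u23 \<in> carrier_vec n3" "x3 \<cdot>\<^sub>v w2 - x2 \<cdot>\<^sub>v w3 = h *\<^sub>v u23"
    by (rule cross_combination_in_image[OF g h exact w2(1) w3(1) v w2(2) w3(2)])
  have "h *\<^sub>v (x3 \<cdot>\<^sub>v u12 - x2 \<cdot>\<^sub>v u13 + x1 \<cdot>\<^sub>v u23)
      = x3 \<cdot>\<^sub>v (h *\<^sub>v u12) - x2 \<cdot>\<^sub>v (h *\<^sub>v u13) + x1 \<cdot>\<^sub>v (h *\<^sub>v u23)"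
    using h u12(1) u13(1) u23(1)
    by (simp add: mult_add_distrib_mat_vec[of _ n2 n3] mult_minus_distrib_mat_vec mult_mat_vec_smult)
  also have "\<dots> = 0\<^sub>v n2"
    unfolding u12(2)[symmetric] u13(2)[symmetric] u23(2)[symmetric]
    using w1(1) w2(1) w3(1) by (intro eq_vecI) (auto simp: algebra_simps)
  finally have "x3 \<cdot>\<^sub>v u12 - x2 \<cdot>\<^sub>v u13 + x1 \<cdot>\<^sub>v u23 = 0\<^sub>v n3"
    using u12(1) u13(1) u23(1) by (intro h_inj) auto
  then have "x3 \<cdot>\<^sub>v u12 = x1 \<cdot>\<^sub>v (- u23) + x2 \<cdot>\<^sub>v u13"
    using u12(1) u13(1) u23(1) by (auto simp: vec_eq_iff algebra_simps)
  moreover have "- u23 \<in> carrier_vec n3"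
    using u23(1) by simp
  ultimately obtain p q where "p \<in> carrier_vec n3" "q \<in> carrier_vec n3" "u12 = x1 \<cdot>\<^sub>v p + x2 \<cdot>\<^sub>v q"
    using smult_vec_divide2[OF reg3 u12(1) _ u13(1)] by blast
  then show thesis
    using that u12(2) by blast
qed

lemma exact_if_annihilated_by_regular_triple:
  fixes f :: "'a::comm_ring_1 mat"
  assumes f: "f \<in> carrier_mat n0 n1" and g: "g \<in> carrier_mat n1 n2" and h: "h \<in> carrier_mat n2 n3"
    and complex: "g * h = 0\<^sub>m n1 n3"
    and h_inj: "\<And>u. u \<in> carrier_vec n3 \<Longrightarrow> h *\<^sub>v u = 0\<^sub>v n2 \<Longrightarrow> u = 0\<^sub>v n3"
    and exact: "annihilates_homology 1 g h"
    and reg1: "\<forall>r. x1 * r = 0 \<longrightarrow> r = 0"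
    and reg2: "\<forall>r c. x2 * r = c * x1 \<longrightarrow> (\<exists>d. r = d * x1)"
    and reg3: "\<forall>r a b. x3 * r = a * x1 + b * x2 \<longrightarrow> (\<exists>c d. r = c * x1 + d * x2)"
    and ann1: "annihilates_homology x1 f g" and ann2: "annihilates_homology x2 f g"
    and ann3: "annihilates_homology x3 f g"
  shows "annihilates_homology 1 f g"
proof (rule annihilates_homologyI[OF f g])
  fix v assume v: "v \<in> carrier_vec n1" "f *\<^sub>v v = 0\<^sub>v n0"
  obtain w1 where w1: "w1 \<in> carrier_vec n2" "x1 \<cdot>\<^sub>v v = g *\<^sub>v w1"
    by (rule annihilates_homologyE[OF ann1 f g v])
  obtain w2 where w2: "w2 \<in> carrier_vec n2" "x2 \<cdot>\<^sub>v v = g *\<^sub>v w2"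
    by (rule annihilates_homologyE[OF ann2 f g v])
  obtain w3 where w3: "w3 \<in> carrier_vec n2" "x3 \<cdot>\<^sub>v v = g *\<^sub>v w3"
    by (rule annihilates_homologyE[OF ann3 f g v])
  obtain p q where pq: "p \<in> carrier_vec n3" "q \<in> carrier_vec n3"
      "x2 \<cdot>\<^sub>v w1 - x1 \<cdot>\<^sub>v w2 = h *\<^sub>v (x1 \<cdot>\<^sub>v p + x2 \<cdot>\<^sub>v q)"
    by (rule cross_combination_in_regular_image[OF g h h_inj exact reg3 v(1) w1 w2 w3])
  have "x2 \<cdot>\<^sub>v (w1 - h *\<^sub>v q) = x1 \<cdot>\<^sub>v (w2 + h *\<^sub>v p)"
    using pq h w1(1) w2(1)
    by (auto simp: vec_eq_iff algebra_simps mult_add_distrib_mat_vec[of _ n2 n3] mult_mat_vec_smult)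
  moreover have "w1 - h *\<^sub>v q \<in> carrier_vec n2" "w2 + h *\<^sub>v p \<in> carrier_vec n2"
    using w1(1) w2(1) h pq by auto
  ultimately obtain w where w: "w \<in> carrier_vec n2" "w1 - h *\<^sub>v q = x1 \<cdot>\<^sub>v w"
    using smult_vec_divide[OF reg2] by blast
  have "w1 = x1 \<cdot>\<^sub>v w + h *\<^sub>v q"
    using w w1(1) h pq(2) by (auto simp: vec_eq_iff diff_eq_eq add.commute)
  then have "g *\<^sub>v w1 = x1 \<cdot>\<^sub>v (g *\<^sub>v w) + g *\<^sub>v (h *\<^sub>v q)"
    using g h w(1) pq(2) by (simp add: mult_add_distrib_mat_vec[of _ n1 n2] mult_mat_vec_smult)
  also have "g *\<^sub>v (h *\<^sub>v q) = 0\<^sub>v n1"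
    using g h pq(2) by (simp add: assoc_mult_mat_vec[symmetric] complex vec_eq_iff)
  finally have "x1 \<cdot>\<^sub>v v = x1 \<cdot>\<^sub>v (g *\<^sub>v w)"
    using w1(2) g w(1) by simp
  then have "v = g *\<^sub>v w"
    using g w by (intro smult_vec_cancel[OF reg1 v(1)]) auto
  then show "\<exists>w \<in> carrier_vec n2. 1 \<cdot>\<^sub>v v = g *\<^sub>v w"
    using w by auto
qed

text \<open>Adding the zero map \<open>R\<^sup>0 \<rightarrow> R\<^sup>n\<^sup>3\<close> turns the last homology module \<open>ker f\<^sub>3\<close> into
  an instance of \<^const>\<open>annihilates_homology\<close>.\<close>

definition annihilates_homology3 :: "'a::comm_ring_1 \<Rightarrow> 'a mat \<Rightarrow> 'a mat \<Rightarrow> 'a mat \<Rightarrow> bool" where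
  "annihilates_homology3 x f1 f2 f3 \<longleftrightarrow>
     annihilates_homology x f1 f2 \<and> annihilates_homology x f2 f3 \<and>
     annihilates_homology x f3 (0\<^sub>m (dim_col f3) 0)"

lemma acyclic3_iff_annihilates_homology3_one:
  assumes f1: "f1 \<in> carrier_mat n0 n1" and f2: "f2 \<in> carrier_mat n1 n2" and f3: "f3 \<in> carrier_mat n2 n3"
  shows "acyclic3 f1 f2 f3 \<longleftrightarrow> annihilates_homology3 1 f1 f2 f3"
  using carrier_matD[OF f1] carrier_matD[OF f2] carrier_matD[OF f3]
  unfolding acyclic3_def annihilates_homology3_def
    annihilates_homology_def[of 1 f1] annihilates_homology_def[of 1 f2]
  by (simp add: annihilates_homology_zero_mat_iff[OF f3])

lemma annihilates_homology3_ideal_gen: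
  assumes "f1 \<in> carrier_mat n0 n1" "f2 \<in> carrier_mat n1 n2" "f3 \<in> carrier_mat n2 n3"
    and "finite S" "\<forall>s \<in> S. annihilates_homology3 s f1 f2 f3" "y \<in> ideal_gen S"
  shows "annihilates_homology3 y f1 f2 f3"
  using assms annihilates_homology_ideal_gen[of _ n0 n1 _ n2 S y]
    annihilates_homology_ideal_gen[of _ n1 n2 _ n3 S y]
    annihilates_homology_ideal_gen[of _ n2 n3 "0\<^sub>m n3 0" 0 S y]
  unfolding annihilates_homology3_def by auto

definition smult_null_homotopy ::
    "'a::comm_ring_1 \<Rightarrow> 'a mat \<Rightarrow> 'a mat \<Rightarrow> 'a mat \<Rightarrow> 'a mat \<Rightarrow> 'a mat \<Rightarrow> 'a mat \<Rightarrow> bool" where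
  "smult_null_homotopy x f1 f2 f3 s0 s1 s2 \<longleftrightarrow>
     f2 * s1 + s0 * f1 = x \<cdot>\<^sub>m 1\<^sub>m (dim_col f1) \<and>
     f3 * s2 + s1 * f2 = x \<cdot>\<^sub>m 1\<^sub>m (dim_col f2) \<and>
     s2 * f3 = x \<cdot>\<^sub>m 1\<^sub>m (dim_col f3)"

lemma annihilates_homology3_if_null_homotopy:
  assumes f1: "f1 \<in> carrier_mat n0 n1" and f2: "f2 \<in> carrier_mat n1 n2" and f3: "f3 \<in> carrier_mat n2 n3"
    and s0: "s0 \<in> carrier_mat n1 n0" and s1: "s1 \<in> carrier_mat n2 n1" and s2: "s2 \<in> carrier_mat n3 n2"
    and "smult_null_homotopy x f1 f2 f3 s0 s1 s2"
  shows "annihilates_homology3 x f1 f2 f3"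
proof -
  have h: "f2 * s1 + s0 * f1 = x \<cdot>\<^sub>m 1\<^sub>m n1" "f3 * s2 + s1 * f2 = x \<cdot>\<^sub>m 1\<^sub>m n2"
      "0\<^sub>m n3 0 * 0\<^sub>m 0 n3 + s2 * f3 = x \<cdot>\<^sub>m 1\<^sub>m n3"
    using assms(7) f1 f2 f3 s2 unfolding smult_null_homotopy_def by auto
  show ?thesis
    unfolding annihilates_homology3_def using f3
    by (auto intro: annihilates_homology_if_homotopy[OF f1 f2 s1 s0 h(1)]
        annihilates_homology_if_homotopy[OF f2 f3 s2 s1 h(2)]
        annihilates_homology_if_homotopy[OF f3 zero_carrier_mat zero_carrier_mat s2 h(3)])
qed

lemma acyclic3_if_annihilated_by_regular_sequence:
  assumes f1: "f1 \<in> carrier_mat n0 n1" and f2: "f2 \<in> carrier_mat n1 n2" and f3: "f3 \<in> carrier_mat n2 n3"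
    and complex: "f2 * f3 = 0\<^sub>m n1 n3"
    and regular: "weak_regular_seq [x1, x2, x3]"
    and ann: "\<forall>x \<in> {x1, x2, x3}. annihilates_homology3 x f1 f2 f3"
  shows "acyclic3 f1 f2 f3"
proof -
  note reg = weak_regular_seq_3D[OF regular]
  have ann1: "annihilates_homology3 x1 f1 f2 f3" and ann2: "annihilates_homology3 x2 f1 f2 f3"
    and ann3: "annihilates_homology3 x3 f1 f2 f3"
    using ann by auto
  have exact3: "annihilates_homology 1 f3 (0\<^sub>m n3 0)"
    using ann1 f3 unfolding annihilates_homology3_def
    by (intro exact_if_annihilated_by_nonzerodivisor[OF f3 reg(1)]) auto
  have f3_inj: "\<And>u. u \<in> carrier_vec n3 \<Longrightarrow> f3 *\<^sub>v u = 0\<^sub>v n2 \<Longrightarrow> u = 0\<^sub>v n3"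
    using exact3 unfolding annihilates_homology_zero_mat_iff[OF f3] by simp
  have exact2: "annihilates_homology 1 f2 f3"
    using ann1 ann2 unfolding annihilates_homology3_def
    by (intro exact_if_annihilated_by_regular_pair[OF f2 f3 f3_inj reg(1,2)]) auto
  have exact1: "annihilates_homology 1 f1 f2"
    using ann1 ann2 ann3 unfolding annihilates_homology3_def
    by (intro exact_if_annihilated_by_regular_triple[OF f1 f2 f3 complex f3_inj exact2 reg]) auto
  show ?thesis
    unfolding acyclic3_iff_annihilates_homology3_one[OF f1 f2 f3] annihilates_homology3_def
    using exact1 exact2 exact3 f3 by simp
qed

section \<open>The complex \<open>\<bbbQ>\<close>\<close>

context
  fixes a11 a12 a13 a21 a22 a23 l11 l12 l13 l21 l22 l23 p12 p13 p23 z1 z2 :: "'a::comm_ring_1"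
begin

abbreviation "Q\<^sub>1 \<equiv> q1 a11 a12 a13 a21 a22 a23 l11 l12 l13 l21 l22 l23 p12 p13 p23 z1 z2"
abbreviation "Q\<^sub>2 \<equiv> q2 a11 a12 a13 a21 a22 a23 l11 l12 l13 l21 l22 l23 p12 p13 p23 z1 z2"
abbreviation "Q\<^sub>3 \<equiv> q3 a11 a12 a13 a21 a22 a23 l11 l12 l13 l21 l22 l23 p12 p13 p23 z1 z2"

definition N :: 'a where
  "N = (a11*l21 - a21*l11) + (a12*l22 - a22*l12) + (a13*l23 - a23*l13)"

lemma q1_eq: "Q\<^sub>1 = mat_of_rows_list 5 [[
    - (p23 * (l12*l23 - l13*l22) + p13 * (l11*l23 - l13*l21) + p12 * (l11*l22 - l12*l21))
      - z2 * N - z2 * z1,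
    p23 * (a11*l21 - a21*l11) - p13 * (a12*l21 - a22*l11) + p12 * (a13*l21 - a23*l11)
      - z2 * (a12*a23 - a13*a22) + z1 * p23,
    p23 * (a11*l22 - a21*l12) - p13 * (a12*l22 - a22*l12) + p12 * (a13*l22 - a23*l12)
      + z2 * (a11*a23 - a13*a21) - z1 * p13,
    p23 * (a11*l23 - a21*l13) - p13 * (a12*l23 - a22*l13) + p12 * (a13*l23 - a23*l13)
      - z2 * (a11*a22 - a12*a21) + z1 * p12,
    - ((a11*l11 + a12*l12 + a13*l13) * (a21*l21 + a22*l22 + a23*l23)
       - (a11*l21 + a12*l22 + a13*l23) * (a21*l11 + a22*l12 + a23*l13))
      - z1 * N - z1^2]]"
proof -
  have det_PL: "det (mat_of_rows_list 3 [[p23, - p13, p12], [l11, l12, l13], [l21, l22, l23]]) =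
      p23 * (l12*l23 - l13*l22) + p13 * (l11*l23 - l13*l21) + p12 * (l11*l22 - l12*l21)"
    by (subst det_dim_3) (auto simp: mat_of_rows_list_def eval_nat_numeral algebra_simps)
  have det_AL: "det (matA a11 a12 a13 a21 a22 a23 * transpose_mat (matL l11 l12 l13 l21 l22 l23)) =
      (a11*l11 + a12*l12 + a13*l13) * (a21*l21 + a22*l22 + a23*l23)
       - (a11*l21 + a12*l22 + a13*l23) * (a21*l11 + a22*l12 + a23*l13)"
    by (subst det_dim_2)
      (auto simp: matA_def matL_def mat_of_rows_list_def eval_nat_numeral scalar_prod_def row_def col_def)
  show ?thesis
    unfolding q1_def Let_def det_PL det_AL N_def
    by (simp add: matA_def mat_of_rows_list_def eval_nat_numeral scalar_prod_def row_def
        mult_mat_vec_def algebra_simps)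
qed

lemma q2_q3_complex: "Q\<^sub>2 * Q\<^sub>3 = 0\<^sub>m 5 2"
  by (rule eq_matI)
    (auto simp: q2_def q3_def mat_of_rows_list_def mat_of_cols_list_def scalar_prod_def
      atLeast0LessThan eval_nat_numeral less_Suc_eq algebra_simps)

lemma q1_q2_complex: "Q\<^sub>1 * Q\<^sub>2 = 0\<^sub>m 1 6"
  by (rule eq_matI)
    (auto simp: q1_eq N_def q2_def mat_of_rows_list_def mat_of_cols_list_def scalar_prod_def
      atLeast0LessThan eval_nat_numeral less_Suc_eq algebra_simps)

definition q_homotopy1 :: "nat \<Rightarrow> 'a mat" where
  "q_homotopy1 k = [
    mat_of_rows_list 5 [
      [0, l11, l12, l13, 0],
      [0, l21, l22, l23, 0],
      [0, - p23, p13, - p12, N + z1],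
      [0, z2, 0, 0, l12*l23 - l13*l22],
      [0, 0, z2, 0, - l11*l23 + l13*l21],
      [0, 0, 0, z2, l11*l22 - l12*l21]],
    mat_of_rows_list 5 [
      [- l11, 0, a13, - a12, 0],
      [- l21, 0, a23, - a22, 0],
      [p23, 0, 0, 0, a12*a23 - a13*a22],
      [- z2, 0, - p13, p12, - a11*l21 + a21*l11 - z1],
      [0, 0, - p23, 0, - a12*l21 + a22*l11],
      [0, 0, 0, - p23, - a13*l21 + a23*l11]],
    mat_of_rows_list 5 [
      [- l12, - a13, 0, a11, 0],
      [- l22, - a23, 0, a21, 0],
      [- p13, 0, 0, 0, - a11*a23 + a13*a21],
      [0, p13, 0, 0, - a11*l22 + a21*l12],
      [- z2, p23, 0, p12, - a12*l22 + a22*l12 - z1],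
      [0, 0, 0, p13, - a13*l22 + a23*l12]],
    mat_of_rows_list 5 [
      [- l13, a12, - a11, 0, 0],
      [- l23, a22, - a21, 0, 0],
      [p12, 0, 0, 0, a11*a22 - a12*a21],
      [0, - p12, 0, 0, - a11*l23 + a21*l13],
      [0, 0, - p12, 0, - a12*l23 + a22*l13],
      [- z2, p23, - p13, 0, - a13*l23 + a23*l13 - z1]],
    mat_of_rows_list 5 [
      [0, 0, 0, 0, 0],
      [0, 0, 0, 0, 0],
      [- N - z1, - a12*a23 + a13*a22, a11*a23 - a13*a21, - a11*a22 + a12*a21, 0],
      [- l12*l23 + l13*l22, a11*l21 - a21*l11 + z1, a11*l22 - a21*l12, a11*l23 - a21*l13, 0],
      [l11*l23 - l13*l21, a12*l21 - a22*l11, a12*l22 - a22*l12 + z1, a12*l23 - a22*l13, 0],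
      [- l11*l22 + l12*l21, a13*l21 - a23*l11, a13*l22 - a23*l12, a13*l23 - a23*l13 + z1, 0]]
  ] ! k"

definition q_homotopy2 :: "nat \<Rightarrow> 'a mat" where
  "q_homotopy2 k = [
    mat_of_rows_list 6 [
      [0, z2, 0, - l21, - l22, - l23],
      [- z2, 0, 0, l11, l12, l13]],
    mat_of_rows_list 6 [
      [0, - p23, - l21, 0, - a23, a22],
      [p23, 0, l11, 0, a13, - a12]],
    mat_of_rows_list 6 [
      [0, p13, - l22, a23, 0, - a21],
      [- p13, 0, l12, - a13, 0, a11]],
    mat_of_rows_list 6 [
      [0, - p12, - l23, - a22, a21, 0],
      [p12, 0, l13, a12, - a11, 0]],
    mat_of_rows_list 6 [
      [- (a21*l21 + a22*l22 + a23*l23), a11*l21 + a12*l22 + a13*l23 + z1, 0, 0, 0, 0],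
      [a21*l11 + a22*l12 + a23*l13 - z1, - (a11*l11 + a12*l12 + a13*l13), 0, 0, 0, 0]]
  ] ! k"

text \<open>The component \<open>R \<rightarrow> R\<^sup>5\<close> of the homotopy for \<open>g\<^sub>k\<close> is the \<open>k\<close>-th unit vector,
  since \<open>q\<^sub>1 e\<^sub>k = g\<^sub>k\<close>.\<close>

lemma q_null_homotopy:
  assumes "k < 5"
  shows "smult_null_homotopy (Q\<^sub>1 $$ (0, k)) Q\<^sub>1 Q\<^sub>2 Q\<^sub>3
    (mat_of_cols 5 [unit_vec 5 k]) (q_homotopy1 k) (q_homotopy2 k)"
proof -
  from assms consider "k = 0" | "k = 1" | "k = 2" | "k = 3" | "k = 4"
    by linarith
  then show ?thesis
    unfolding smult_null_homotopy_def
    by cases (intro conjI eq_matI;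
      auto simp: q1_eq N_def q2_def q3_def q_homotopy1_def q_homotopy2_def mat_of_rows_list_def
        mat_of_cols_list_def mat_of_cols_def scalar_prod_def atLeast0LessThan eval_nat_numeral
        less_Suc_eq algebra_simps)+
qed

lemma q_carrier_mat:
  "Q\<^sub>1 \<in> carrier_mat 1 5" "Q\<^sub>2 \<in> carrier_mat 5 6" "Q\<^sub>3 \<in> carrier_mat 6 2"
  by (simp_all add: q1_eq q2_def q3_def mat_of_rows_list_def mat_of_cols_list_def eval_nat_numeral)

lemma q_homotopy_carrier_mat:
  assumes "k < 5"
  shows "q_homotopy1 k \<in> carrier_mat 6 5" "q_homotopy2 k \<in> carrier_mat 2 6"
  using assms unfolding q_homotopy1_def q_homotopy2_def
  by (auto simp: mat_of_rows_list_def less_Suc_eq eval_nat_numeral)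

lemma q1_entry_annihilates_homology3:
  assumes "k < 5"
  shows "annihilates_homology3 (Q\<^sub>1 $$ (0, k)) Q\<^sub>1 Q\<^sub>2 Q\<^sub>3"
  by (rule annihilates_homology3_if_null_homotopy[OF q_carrier_mat _
        q_homotopy_carrier_mat[OF assms] q_null_homotopy[OF assms]])
    (use mat_of_cols_carrier(1)[of 5 "[unit_vec 5 k]"] in simp)

lemma q_is_complex3: "is_complex3 Q\<^sub>1 Q\<^sub>2 Q\<^sub>3"
  using q_carrier_mat q1_q2_complex q2_q3_complex by (simp add: is_complex3_def)

lemma q_acyclic3_if_regular_sequence:
  assumes "weak_regular_seq [x1, x2, x3]"
    and "{x1, x2, x3} \<subseteq> ideal_gen {Q\<^sub>1 $$ (0, j) | j. j < 5}"
  shows "acyclic3 Q\<^sub>1 Q\<^sub>2 Q\<^sub>3"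
proof (rule acyclic3_if_annihilated_by_regular_sequence[OF q_carrier_mat q2_q3_complex assms(1)])
  have finite: "finite {Q\<^sub>1 $$ (0, j) | j. j < 5}"
    by simp
  have entries: "\<forall>s \<in> {Q\<^sub>1 $$ (0, j) | j. j < 5}. annihilates_homology3 s Q\<^sub>1 Q\<^sub>2 Q\<^sub>3"
    using q1_entry_annihilates_homology3 by blast
  show "\<forall>x \<in> {x1, x2, x3}. annihilates_homology3 x Q\<^sub>1 Q\<^sub>2 Q\<^sub>3"
    using assms(2) annihilates_homology3_ideal_gen[OF q_carrier_mat finite entries] by blast
qed

end

theorem theorem3p5:
  fixes a11 a12 a13 a21 a22 a23 l11 l12 l13 l21 l22 l23 p12 p13 p23 z1 z2 :: "'a::comm_ring_1"
  assumes "noetherian_ring TYPE('a)"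
  defines "Q1 \<equiv> q1 a11 a12 a13 a21 a22 a23 l11 l12 l13 l21 l22 l23 p12 p13 p23 z1 z2"
      and "Q2 \<equiv> q2 a11 a12 a13 a21 a22 a23 l11 l12 l13 l21 l22 l23 p12 p13 p23 z1 z2"
      and "Q3 \<equiv> q3 a11 a12 a13 a21 a22 a23 l11 l12 l13 l21 l22 l23 p12 p13 p23 z1 z2"
  shows "is_complex3 Q1 Q2 Q3 \<and>
         (grade_at_least 3 (ideal_gen {Q1 $$ (0, j) | j. j < 5}) \<longrightarrow> acyclic3 Q1 Q2 Q3)"
proof (intro conjI impI)
  show "is_complex3 Q1 Q2 Q3"
    unfolding Q1_def Q2_def Q3_def by (rule q_is_complex3)
  assume "grade_at_least 3 (ideal_gen {Q1 $$ (0, j) | j. j < 5})"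
  then obtain x1 x2 x3 where "weak_regular_seq [x1, x2, x3]"
      and "{x1, x2, x3} \<subseteq> ideal_gen {Q1 $$ (0, j) | j. j < 5}"
    unfolding grade_at_least_def by (auto simp: numeral_3_eq_3 length_Suc_conv)
  then show "acyclic3 Q1 Q2 Q3"
    unfolding Q1_def Q2_def Q3_def by (rule q_acyclic3_if_regular_sequence)
qed

end
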